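(* Let $q$ be a prime power and $X\subseteq\mathbb{P}^2$ the Hermitian curve over $\mathbb{F}_{q^2}$. Fix an integer $e\in\{2,\dots,q+1\}$ and a point $P\in X(\mathbb{F}_{q^2})$. Let $E\subseteq X$ be the divisor $eP$, seen as a closed degree $e$ subscheme of $\mathbb{P}^2$. Let $T\subseteq\mathbb{P}^2$ be any effective divisor (a plane curve, possibly with multiple components) of degree at most $e-1$ containing $E$. Then $L_{X,P}\subseteq T$, i.e. $L_{X,P}$ is one of the components of $T$.
   Context: $\mathbb{P}^2$ is the projective plane over $\mathbb{F}_{q^2}$ with coordinates $(x:y:z)$. The Hermitian curve $X$ is the projective plane curve with affine equation $y+y^q=x^{q+1}$; it is smooth of degree $q+1$. For $P\in X(\mathbb{F}_{q^2})$, $L_{X,P}$ denotes the tangent line to $X$ at $P$. *)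

theory Defs
  imports "HOL-Computational_Algebra.Polynomial" "HOL-Library.Cardinality"
begin

text \<open>Polynomials in three variables X, Y, Z over a ring 'a are encoded as nested
univariate polynomials: an element of 'a poly poly poly is a polynomial in Z whose
coefficients are polynomials in Y whose coefficients are polynomials in X.\<close>

type_synonym 'a poly3 = "'a poly poly poly"

definition cst3 :: "'a::comm_ring_1 \<Rightarrow> 'a poly3" where
  "cst3 c = [:[:[:c:]:]:]"

definition varX :: "'a::comm_ring_1 poly3" where
  "varX = [:[:[:0, 1:]:]:]"

definition varY :: "'a::comm_ring_1 poly3" where
  "varY = [:[:0, 1:]:]"

definition varZ :: "'a::comm_ring_1 poly3" where
  "varZ = [:0, 1:]"

definition coeff3 :: "'a::zero poly3 \<Rightarrow> nat \<Rightarrow> nat \<Rightarrow> nat \<Rightarrow> 'a" where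
  "coeff3 G i j k = coeff (coeff (coeff G k) j) i"

definition homogeneous3 :: "nat \<Rightarrow> 'a::zero poly3 \<Rightarrow> bool" where
  "homogeneous3 d G \<longleftrightarrow> (\<forall>i j k. coeff3 G i j k \<noteq> 0 \<longrightarrow> i + j + k = d)"

definition eval3 :: "'a::comm_ring_1 poly3 \<Rightarrow> 'a \<Rightarrow> 'a \<Rightarrow> 'a \<Rightarrow> 'a" where
  "eval3 G a b c = poly (map_poly (\<lambda>Q. poly (map_poly (\<lambda>p. poly p a) Q) b) G) c"

definition pdX :: "'a::idom poly3 \<Rightarrow> 'a poly3" where
  "pdX G = map_poly (map_poly pderiv) G"

definition pdY :: "'a::idom poly3 \<Rightarrow> 'a poly3" where
  "pdY G = map_poly pderiv G"

definition pdZ :: "'a::idom poly3 \<Rightarrow> 'a poly3" where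
  "pdZ G = pderiv G"

text \<open>The homogeneous equation of the Hermitian curve: Y Z^q + Y^q Z - X^(q+1)
(the homogenisation of y + y^q = x^(q+1)).\<close>
definition hermitian :: "nat \<Rightarrow> 'a::comm_ring_1 poly3" where
  "hermitian q = varY * varZ ^ q + varY ^ q * varZ - varX ^ (q + 1)"

definition linform :: "'a::comm_ring_1 \<Rightarrow> 'a \<Rightarrow> 'a \<Rightarrow> 'a poly3" where
  "linform a b c = cst3 a * varX + cst3 b * varY + cst3 c * varZ"

definition tangent_line :: "'a::idom poly3 \<Rightarrow> 'a \<Rightarrow> 'a \<Rightarrow> 'a \<Rightarrow> 'a poly3" where
  "tangent_line F a b c =
     linform (eval3 (pdX F) a b c) (eval3 (pdY F) a b c) (eval3 (pdZ F) a b c)"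

inductive_set ideal_gen :: "'a::comm_ring_1 set \<Rightarrow> 'a set" for S where
  zero: "0 \<in> ideal_gen S"
| step: "g \<in> S \<Longrightarrow> h \<in> ideal_gen S \<Longrightarrow> r * g + h \<in> ideal_gen S"

definition point_ideal_pow :: "'a::comm_ring_1 \<Rightarrow> 'a \<Rightarrow> 'a \<Rightarrow> nat \<Rightarrow> 'a poly3 set" where
  "point_ideal_pow a b c e = ideal_gen
     {prod_list (map (\<lambda>(u, v, w). linform u v w) ls) | ls.
        length ls = e \<and> (\<forall>(u, v, w) \<in> set ls. u * a + v * b + w * c = 0)}"

text \<open>The closed subscheme E = e P of the curve F = 0 (ideal (F) + m_P^e in the local
ring of the plane at P) is contained in the curve T = 0: in the local ring at P,
T lies in (F) + m_P^e, i.e. after clearing denominators there are a homogeneous U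
not vanishing at P and some A with U T - A F in the e-th power of the ideal of P.\<close>
definition subscheme_contained :: "'a::comm_ring_1 poly3 \<Rightarrow> 'a \<Rightarrow> 'a \<Rightarrow> 'a \<Rightarrow> nat \<Rightarrow> 'a poly3 \<Rightarrow> bool" where
  "subscheme_contained F a b c e T \<longleftrightarrow>
     (\<exists>U A u. homogeneous3 u U \<and> eval3 U a b c \<noteq> 0 \<and>
        U * T - A * F \<in> point_ideal_pow a b c e)"

end

theory Submission
  imports Defs "HOL-Computational_Algebra.Primes"
begin

text \<open>Let \<open>F = Y Z^q + Y^q Z - X^(q+1)\<close> and \<open>h(P, P') = b c'^q + c b'^q - a a'^q\<close>, so that
\<open>F(P) = h(P, P)\<close> and the tangent line at \<open>P\<close> is \<open>h(-, P) = 0\<close>. Since \<open>x^(q^2) = x\<close> on the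
field, \<open>h(P, P') = h(P', P)^q\<close>; hence for a second point \<open>P'\<close> of the tangent line the
Frobenius expansion gives \<open>F(sP + tP') = h(P', P') t^(q+1)\<close>. Restricting \<open>U T - A F \<in> m\<^sub>P^e\<close> to
the line \<open>sP + tP'\<close> shows that \<open>t^e\<close> divides \<open>T(sP + tP')\<close>, a binary form of degree \<open>d < e\<close>.
So \<open>T\<close> vanishes identically on the tangent line, and after a linear change of coordinates
the tangent line divides \<open>T\<close>.\<close>

section \<open>Ring homomorphisms and substitution\<close>

definition ring_homomorphism :: "('a::comm_ring_1 \<Rightarrow> 'b::comm_ring_1) \<Rightarrow> bool" where
  "ring_homomorphism f \<longleftrightarrow>
     (\<forall>x y. f (x + y) = f x + f y) \<and> (\<forall>x y. f (x * y) = f x * f y) \<and> f 1 = 1"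

lemma ring_homomorphismD:
  assumes "ring_homomorphism f"
  shows "f (x + y) = f x + f y" "f (x * y) = f x * f y" "f 1 = 1" "f 0 = 0"
    "f (- x) = - f x" "f (x - y) = f x - f y" "f (x ^ n) = f x ^ n"
proof -
  have add: "f (u + v) = f u + f v" for u v
    using assms by (simp add: ring_homomorphism_def)
  then show "f (x + y) = f x + f y" .
  show "f (x * y) = f x * f y" "f 1 = 1"
    using assms by (simp_all add: ring_homomorphism_def)
  have "f 0 + f 0 = f 0"
    using add[of 0 0] by simp
  then show zero: "f 0 = 0" by simp
  have uminus: "f (- u) = - f u" for u
    using add[of "- u" u] zero by (simp add: eq_neg_iff_add_eq_0)
  then show "f (- x) = - f x" .
  show "f (x - y) = f x - f y"
    using add[of x "- y"] uminus[of y] by simp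
  show "f (x ^ n) = f x ^ n"
    using assms by (induct n) (auto simp: ring_homomorphism_def)
qed

lemma ring_homomorphism_prod_list:
  "ring_homomorphism f \<Longrightarrow> f (prod_list xs) = prod_list (map f xs)"
  by (induct xs) (auto simp: ring_homomorphismD)

lemma ring_homomorphism_of_nat: "ring_homomorphism f \<Longrightarrow> f (of_nat n) = of_nat n"
  by (induct n) (simp_all add: ring_homomorphismD)

lemma ring_homomorphism_ident: "ring_homomorphism (\<lambda>x. x)"
  by (auto simp: ring_homomorphism_def)

lemma ring_homomorphism_comp:
  "ring_homomorphism f \<Longrightarrow> ring_homomorphism g \<Longrightarrow> ring_homomorphism (\<lambda>x. g (f x))"
  by (auto simp: ring_homomorphism_def)

lemma ring_homomorphism_const_poly: "ring_homomorphism (\<lambda>a::'a::comm_ring_1. [:a:])"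
  by (auto simp: ring_homomorphism_def one_pCons)

lemma ring_homomorphism_poly: "ring_homomorphism (\<lambda>p. poly p x)"
  by (auto simp: ring_homomorphism_def)

lemma ring_homomorphism_cst3: "ring_homomorphism (cst3 :: 'a::comm_ring_1 \<Rightarrow> 'a poly3)"
  by (auto simp: ring_homomorphism_def cst3_def one_pCons)

definition eval_hom :: "('a::comm_ring_1 \<Rightarrow> 'b::comm_ring_1) \<Rightarrow> 'b \<Rightarrow> 'a poly \<Rightarrow> 'b" where
  "eval_hom h x p = poly (map_poly h p) x"

lemma eval_hom_0 [simp]: "eval_hom h x 0 = 0"
  by (simp add: eval_hom_def)

lemma eval_hom_pCons:
  "ring_homomorphism h \<Longrightarrow> eval_hom h x (pCons a p) = h a + x * eval_hom h x p"
  by (simp add: eval_hom_def map_poly_pCons ring_homomorphismD)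

lemma eval_hom_add:
  assumes "ring_homomorphism h"
  shows "eval_hom h x (p + q) = eval_hom h x p + eval_hom h x q"
proof -
  have "map_poly h (p + q) = map_poly h p + map_poly h q"
    by (rule poly_eqI) (simp add: coeff_map_poly ring_homomorphismD[OF assms])
  then show ?thesis by (simp add: eval_hom_def)
qed

lemma eval_hom_mult:
  assumes h: "ring_homomorphism h"
  shows "eval_hom h x (p * q) = eval_hom h x p * eval_hom h x q"
proof (induct p)
  case (pCons a p)
  have smult: "eval_hom h x (smult a q) = h a * eval_hom h x q"
  proof -
    have "map_poly h (smult a q) = smult (h a) (map_poly h q)"
      by (rule poly_eqI) (simp add: coeff_map_poly ring_homomorphismD[OF h])
    then show ?thesis by (simp add: eval_hom_def)
  qed
  have "eval_hom h x (pCons a p * q) = eval_hom h x (smult a q + pCons 0 (p * q))"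
    by simp
  also have "\<dots> = h a * eval_hom h x q + x * (eval_hom h x p * eval_hom h x q)"
    using pCons by (simp only: eval_hom_add[OF h] smult eval_hom_pCons[OF h] ring_homomorphismD[OF h] add_0)
  also have "\<dots> = eval_hom h x (pCons a p) * eval_hom h x q"
    by (simp add: eval_hom_pCons[OF h] distrib_right mult.assoc)
  finally show ?case .
qed simp

lemma ring_homomorphism_eval_hom:
  assumes "ring_homomorphism h"
  shows "ring_homomorphism (eval_hom h x)"
proof -
  have "eval_hom h x 1 = 1"
    using assms by (simp add: one_pCons eval_hom_pCons ring_homomorphismD)
  then show ?thesis
    unfolding ring_homomorphism_def using eval_hom_add[OF assms] eval_hom_mult[OF assms] by blast
qed

lemma eval_hom_comp:
  assumes "ring_homomorphism h" "ring_homomorphism g"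
  shows "g (eval_hom h x p) = eval_hom (\<lambda>a. g (h a)) (g x) p"
proof (induct p)
  case (pCons a p)
  then show ?case
    using assms ring_homomorphism_comp[OF assms]
    by (simp add: eval_hom_pCons ring_homomorphismD)
qed (simp add: ring_homomorphismD[OF assms(2)])

lemma degree_eval_hom_le:
  fixes x :: "'b::comm_ring_1 poly"
  assumes h: "ring_homomorphism h" and x: "degree x \<le> 1"
    and coeffs: "\<And>i. coeff p i \<noteq> 0 \<Longrightarrow> degree (h (coeff p i)) + i \<le> D"
  shows "degree (eval_hom h x p) \<le> D"
  using coeffs
proof (induct p arbitrary: D)
  case (pCons a p)
  have "degree (h a) \<le> D"
    using pCons.prems[of 0] ring_homomorphismD(4)[OF h] by (cases "a = 0") simp_all
  moreover have "degree (x * eval_hom h x p) \<le> D"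
  proof (cases "p = 0")
    case False
    then have "D \<ge> 1"
      using pCons.prems[of "Suc (degree p)"] by simp
    moreover have "degree (eval_hom h x p) \<le> D - 1"
      using pCons.prems[of "Suc _"] by (intro pCons.hyps) fastforce
    ultimately show ?thesis
      using degree_mult_le[of x "eval_hom h x p"] x by linarith
  qed simp
  ultimately show ?case
    by (simp add: eval_hom_pCons[OF h] degree_add_le)
qed simp

definition subst3 :: "('a::comm_ring_1 \<Rightarrow> 'b::comm_ring_1) \<Rightarrow> 'b \<Rightarrow> 'b \<Rightarrow> 'b \<Rightarrow> 'a poly3 \<Rightarrow> 'b" where
  "subst3 f x y z = eval_hom (eval_hom (eval_hom f x) y) z"

lemma ring_homomorphism_subst3: "ring_homomorphism f \<Longrightarrow> ring_homomorphism (subst3 f x y z)"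
  unfolding subst3_def by (intro ring_homomorphism_eval_hom)

lemma subst3_comp:
  assumes f: "ring_homomorphism f" and g: "ring_homomorphism g"
  shows "g (subst3 f x y z G) = subst3 (\<lambda>a. g (f a)) (g x) (g y) (g z) G"
proof -
  have "(\<lambda>p. g (eval_hom f x p)) = eval_hom (\<lambda>a. g (f a)) (g x)"
    by (rule ext, rule eval_hom_comp[OF f g])
  moreover have "(\<lambda>Q. g (eval_hom (eval_hom f x) y Q)) = eval_hom (\<lambda>p. g (eval_hom f x p)) (g y)"
    by (rule ext, rule eval_hom_comp[OF ring_homomorphism_eval_hom[OF f] g])
  ultimately show ?thesis
    unfolding subst3_def
    by (subst eval_hom_comp[OF ring_homomorphism_eval_hom[OF ring_homomorphism_eval_hom[OF f]] g]) simp
qed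

lemma subst3_cst3: "ring_homomorphism f \<Longrightarrow> subst3 f x y z (cst3 c) = f c"
  by (simp add: subst3_def cst3_def eval_hom_pCons ring_homomorphism_eval_hom)

lemma subst3_vars:
  assumes "ring_homomorphism f"
  shows "subst3 f x y z varX = x" "subst3 f x y z varY = y" "subst3 f x y z varZ = z"
  using assms
  by (simp_all add: subst3_def varX_def varY_def varZ_def eval_hom_pCons
      ring_homomorphism_eval_hom ring_homomorphismD)

lemma subst3_linform:
  "ring_homomorphism f \<Longrightarrow> subst3 f x y z (linform u v w) = f u * x + f v * y + f w * z"
  by (simp add: linform_def ring_homomorphismD ring_homomorphism_subst3 subst3_cst3 subst3_vars)

lemma eval3_eq_subst3: "eval3 G a b c = subst3 (\<lambda>x. x) a b c G"
  unfolding eval3_def subst3_def eval_hom_def[abs_def] by simp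

lemma subst3_cst3_vars: "subst3 cst3 varX varY varZ G = G"
proof -
  have X: "eval_hom cst3 varX = (\<lambda>p. [:[:p:]:])"
  proof
    show "eval_hom cst3 varX p = [:[:p:]:]" for p
    proof (induct p)
      case (pCons a p)
      then show ?case
        by (simp only: eval_hom_pCons[OF ring_homomorphism_cst3]) (simp add: cst3_def varX_def)
    qed simp
  qed
  have Y: "eval_hom (\<lambda>p. [:[:p:]:]) varY = (\<lambda>Q. [:Q:])"
  proof
    show "eval_hom (\<lambda>p. [:[:p:]:]) varY Q = [:Q:]" for Q
      by (induct Q) (simp_all add: eval_hom_pCons varY_def
          ring_homomorphism_comp[OF ring_homomorphism_const_poly ring_homomorphism_const_poly])
  qed
  have "eval_hom (\<lambda>Q. [:Q:]) varZ G = G"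
    by (induct G) (simp_all add: eval_hom_pCons ring_homomorphism_const_poly varZ_def)
  then show ?thesis
    unfolding subst3_def X Y .
qed

lemma subst3_inverse:
  assumes "subst3 cst3 x' y' z' x = varX" "subst3 cst3 x' y' z' y = varY"
    "subst3 cst3 x' y' z' z = varZ"
  shows "subst3 cst3 x' y' z' (subst3 cst3 x y z G) = G"
proof -
  have "subst3 cst3 x' y' z' (subst3 cst3 x y z G)
      = subst3 (\<lambda>a. subst3 cst3 x' y' z' (cst3 a)) varX varY varZ G"
    using subst3_comp[OF ring_homomorphism_cst3 ring_homomorphism_subst3[OF ring_homomorphism_cst3],
        of x' y' z' x y z G] assms by simp
  also have "\<dots> = G"
    by (simp add: subst3_cst3[OF ring_homomorphism_cst3] subst3_cst3_vars)
  finally show ?thesis .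
qed

lemma homogeneous3_coeff:
  "homogeneous3 d G \<Longrightarrow> coeff (coeff (coeff G k) j) i \<noteq> 0 \<Longrightarrow> i + j + k = d"
  unfolding homogeneous3_def coeff3_def by blast

lemma degree_subst3_homogeneous_le:
  fixes x y z :: "'b::comm_ring_1 poly"
  assumes f: "ring_homomorphism f" and f_const: "\<And>a. degree (f a) = 0"
    and xyz: "degree x \<le> 1" "degree y \<le> 1" "degree z \<le> 1"
    and hom: "homogeneous3 d G"
  shows "degree (subst3 f x y z G) \<le> d"
  unfolding subst3_def
proof (rule degree_eval_hom_le[OF ring_homomorphism_eval_hom[OF ring_homomorphism_eval_hom[OF f]] xyz(3)])
  fix k assume "coeff G k \<noteq> 0"
  then obtain i j where "coeff (coeff (coeff G k) j) i \<noteq> 0"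
    by (metis leading_coeff_0_iff)
  then have "k \<le> d" using homogeneous3_coeff[OF hom] by fastforce
  moreover have "degree (eval_hom (eval_hom f x) y (coeff G k)) \<le> d - k"
  proof (rule degree_eval_hom_le[OF ring_homomorphism_eval_hom[OF f] xyz(2)])
    fix j assume "coeff (coeff G k) j \<noteq> 0"
    then obtain i where "coeff (coeff (coeff G k) j) i \<noteq> 0"
      by (metis leading_coeff_0_iff)
    then have "j \<le> d - k" using homogeneous3_coeff[OF hom] by fastforce
    moreover have "degree (eval_hom f x (coeff (coeff G k) j)) \<le> d - k - j"
      using homogeneous3_coeff[OF hom]
      by (intro degree_eval_hom_le[OF f xyz(1)]) (fastforce simp: f_const)
    ultimately show "degree (eval_hom f x (coeff (coeff G k) j)) + j \<le> d - k"
      by linarith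
  qed
  ultimately show "degree (eval_hom (eval_hom f x) y (coeff G k)) + k \<le> d"
    by linarith
qed

section \<open>Partial derivatives and the tangent line\<close>

definition derivation :: "('a::comm_ring_1 \<Rightarrow> 'a) \<Rightarrow> bool" where
  "derivation D \<longleftrightarrow> (\<forall>x y. D (x + y) = D x + D y) \<and> (\<forall>x y. D (x * y) = D x * y + x * D y)"

lemma derivationD:
  assumes "derivation D"
  shows "D (x + y) = D x + D y" "D (x * y) = D x * y + x * D y" "D 0 = 0" "D 1 = 0"
    "D (x - y) = D x - D y"
proof -
  show add: "D (x + y) = D x + D y" and "D (x * y) = D x * y + x * D y"
    using assms by (auto simp: derivation_def)
  have "D (0 + 0) = D 0 + D 0" and "D (1 * 1) = D 1 * 1 + 1 * D 1"
    using assms unfolding derivation_def by blast+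
  then show "D 0 = 0" and "D 1 = 0" by simp_all
  have "D (x - y) + D y = D x"
    using assms unfolding derivation_def by (metis diff_add_cancel)
  then show "D (x - y) = D x - D y" by (simp add: eq_diff_eq)
qed

lemma derivation_power: "derivation D \<Longrightarrow> D (x ^ n) = of_nat n * x ^ (n - 1) * D x"
proof (induct n)
  case (Suc n)
  then show ?case
    by (cases n) (simp_all add: derivationD algebra_simps)
qed (simp add: derivationD)

lemma derivation_sum: "derivation D \<Longrightarrow> D (sum f A) = (\<Sum>i\<in>A. D (f i))"
  by (induct A rule: infinite_finite_induct) (auto simp: derivationD)

lemma derivation_pderiv: "derivation (pderiv :: 'a::idom poly \<Rightarrow> _)"
  unfolding derivation_def by (simp add: pderiv_add pderiv_mult mult_ac)

lemma derivation_map_poly: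
  assumes D: "derivation D"
  shows "derivation (map_poly D)"
proof -
  note D0 = derivationD(3)[OF D]
  have "map_poly D (p + q) = map_poly D p + map_poly D q" for p q
    by (rule poly_eqI) (simp add: coeff_map_poly D0 derivationD[OF D])
  moreover have "map_poly D (p * q) = map_poly D p * q + p * map_poly D q" for p q
  proof (rule poly_eqI)
    fix n
    have "coeff (map_poly D (p * q)) n = (\<Sum>i\<le>n. D (coeff p i * coeff q (n - i)))"
      by (simp add: coeff_map_poly D0 coeff_mult derivation_sum[OF D])
    also have "\<dots> = (\<Sum>i\<le>n. D (coeff p i) * coeff q (n - i)) + (\<Sum>i\<le>n. coeff p i * D (coeff q (n - i)))"
      by (simp add: derivationD[OF D] sum.distrib)
    also have "\<dots> = coeff (map_poly D p * q + p * map_poly D q) n"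
      by (simp add: coeff_mult coeff_map_poly D0)
    finally show "coeff (map_poly D (p * q)) n = coeff (map_poly D p * q + p * map_poly D q) n" .
  qed
  ultimately show ?thesis
    unfolding derivation_def by blast
qed

definition hermitian_form :: "nat \<Rightarrow> 'a::comm_ring_1 \<Rightarrow> 'a \<Rightarrow> 'a \<Rightarrow> 'a \<Rightarrow> 'a \<Rightarrow> 'a \<Rightarrow> 'a" where
  "hermitian_form q a b c a' b' c' = b * c' ^ q + c * b' ^ q - a * a' ^ q"

lemma eval3_hermitian: "eval3 (hermitian q) a b c = hermitian_form q a b c a b c"
  unfolding eval3_eq_subst3 hermitian_def hermitian_form_def
  by (simp add: ring_homomorphismD[OF ring_homomorphism_subst3[OF ring_homomorphism_ident]]
      subst3_vars[OF ring_homomorphism_ident] mult.commute)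

lemma partial_derivatives_vars:
  "map_poly (map_poly pderiv) varX = (1::'a::idom poly3)"
  "map_poly (map_poly pderiv) varY = (0::'a poly3)"
  "map_poly (map_poly pderiv) varZ = (0::'a poly3)"
  "map_poly pderiv varX = (0::'a poly3)" "map_poly pderiv varY = (1::'a poly3)"
  "map_poly pderiv varZ = (0::'a poly3)"
  "pderiv varX = (0::'a poly3)" "pderiv varY = (0::'a poly3)" "pderiv varZ = (1::'a poly3)"
  by (simp_all add: varX_def varY_def varZ_def one_pCons pderiv_pCons map_poly_pCons)

lemma tangent_line_hermitian:
  fixes a b c :: "'a::field"
  assumes q0: "of_nat q = (0::'a)"
  shows "tangent_line (hermitian q) a b c = linform (- (a ^ q)) (c ^ q) (b ^ q)"
proof -
  have dX: "derivation (map_poly (map_poly pderiv) :: 'a poly3 \<Rightarrow> _)"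
    and dY: "derivation (map_poly pderiv :: 'a poly3 \<Rightarrow> _)"
    and dZ: "derivation (pderiv :: 'a poly3 \<Rightarrow> _)"
    by (intro derivation_map_poly derivation_pderiv)+
  have "pdX (hermitian q :: 'a poly3) = - (of_nat (q + 1) * varX ^ q)"
    unfolding pdX_def hermitian_def
    by (simp only: derivationD[OF dX] derivation_power[OF dX] partial_derivatives_vars) simp
  moreover have "pdY (hermitian q :: 'a poly3) = varZ ^ q + of_nat q * varY ^ (q - 1) * varZ"
    unfolding pdY_def hermitian_def
    by (simp only: derivationD[OF dY] derivation_power[OF dY] partial_derivatives_vars) simp
  moreover have "pdZ (hermitian q :: 'a poly3) = varY * (of_nat q * varZ ^ (q - 1)) + varY ^ q"
    unfolding pdZ_def hermitian_def
    by (simp only: derivationD[OF dZ] derivation_power[OF dZ] partial_derivatives_vars) simp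
  ultimately show ?thesis
    unfolding tangent_line_def eval3_eq_subst3 using q0
    by (simp add: ring_homomorphismD[OF ring_homomorphism_subst3[OF ring_homomorphism_ident]]
        subst3_vars[OF ring_homomorphism_ident]
        ring_homomorphism_of_nat[OF ring_homomorphism_subst3[OF ring_homomorphism_ident]])
qed

section \<open>Restriction to a line\<close>

text \<open>\<open>binary_linform \<alpha> \<beta>\<close> is \<open>\<alpha> s + \<beta> t\<close>, with \<open>s\<close> the inner and \<open>t\<close> the outer variable, so that
\<open>restrict_line a b c a' b' c' G\<close> is \<open>G(sP + tP')\<close> for \<open>P = (a, b, c)\<close>, \<open>P' = (a', b', c')\<close>.\<close>

definition binary_linform :: "'a::comm_ring_1 \<Rightarrow> 'a \<Rightarrow> 'a poly poly" where
  "binary_linform \<alpha> \<beta> = [:[:0, \<alpha>:], [:\<beta>:]:]"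

definition restrict_line :: "'a::comm_ring_1 \<Rightarrow> 'a \<Rightarrow> 'a \<Rightarrow> 'a \<Rightarrow> 'a \<Rightarrow> 'a \<Rightarrow> 'a poly3 \<Rightarrow> 'a poly poly" where
  "restrict_line a b c a' b' c' =
     subst3 (\<lambda>\<alpha>. [:[:\<alpha>:]:]) (binary_linform a a') (binary_linform b b') (binary_linform c c')"

lemma ring_homomorphism_const_const: "ring_homomorphism (\<lambda>\<alpha>::'a::comm_ring_1. [:[:\<alpha>:]:])"
  by (rule ring_homomorphism_comp[OF ring_homomorphism_const_poly ring_homomorphism_const_poly])

lemma ring_homomorphism_restrict_line: "ring_homomorphism (restrict_line a b c a' b' c')"
  unfolding restrict_line_def by (rule ring_homomorphism_subst3[OF ring_homomorphism_const_const])

lemma binary_linform_eq: "binary_linform \<alpha> \<beta> = [:[:\<alpha>:]:] * [:[:0, 1:]:] + [:[:\<beta>:]:] * [:0, 1:]"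
  by (simp add: binary_linform_def)

lemma restrict_line_linform:
  "restrict_line a b c a' b' c' (linform u v w)
     = binary_linform (u * a + v * b + w * c) (u * a' + v * b' + w * c')"
  unfolding restrict_line_def
  by (simp add: subst3_linform[OF ring_homomorphism_const_const] binary_linform_def algebra_simps)

lemma restrict_line_hermitian:
  fixes a b c a' b' c' :: "'a::field"
  assumes "prime CHAR('a)" "q = CHAR('a) ^ k"
    and "hermitian_form q a b c a b c = 0" "hermitian_form q a' b' c' a b c = 0"
    "hermitian_form q a b c a' b' c' = 0"
  shows "restrict_line a b c a' b' c' (hermitian q)
           = [:[:hermitian_form q a' b' c' a' b' c':]:] * [:0, 1:] ^ (q + 1)"
proof -
  define \<kappa> where "\<kappa> = (\<lambda>\<alpha>::'a. [:[:\<alpha>:]:])"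
  define s where "s = ([:[:0, 1:]:] :: 'a poly poly)"
  define t where "t = ([:0, 1:] :: 'a poly poly)"
  have \<kappa>: "ring_homomorphism \<kappa>"
    unfolding \<kappa>_def by (rule ring_homomorphism_const_const)
  have line: "binary_linform \<alpha> \<beta> = \<kappa> \<alpha> * s + \<kappa> \<beta> * t" for \<alpha> \<beta>
    unfolding \<kappa>_def s_def t_def by (rule binary_linform_eq)
  have frobenius: "(\<kappa> \<alpha> * s + \<kappa> \<beta> * t) ^ q = \<kappa> \<alpha> ^ q * s ^ q + \<kappa> \<beta> ^ q * t ^ q" for \<alpha> \<beta>
    using assms(1,2) by (simp add: freshmans_dream' power_mult_distrib)
  have "restrict_line a b c a' b' c' (hermitian q)
      = binary_linform b b' * binary_linform c c' ^ q + binary_linform b b' ^ q * binary_linform c c'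
        - binary_linform a a' * binary_linform a a' ^ q"
    unfolding restrict_line_def hermitian_def \<kappa>_def[symmetric]
    by (simp add: ring_homomorphismD[OF ring_homomorphism_subst3[OF \<kappa>]] subst3_vars[OF \<kappa>])
  also have "\<dots> = \<kappa> (hermitian_form q a b c a b c) * (s * s ^ q)
        + \<kappa> (hermitian_form q a' b' c' a b c) * (t * s ^ q)
        + \<kappa> (hermitian_form q a b c a' b' c') * (s * t ^ q)
        + \<kappa> (hermitian_form q a' b' c' a' b' c') * (t * t ^ q)"
    unfolding line frobenius
    by (simp add: ring_homomorphismD[OF \<kappa>] hermitian_form_def algebra_simps)
  finally have "restrict_line a b c a' b' c' (hermitian q)
      = \<kappa> (hermitian_form q a' b' c' a' b' c') * t ^ (q + 1)"
    using assms(3-5) by (simp add: ring_homomorphismD[OF \<kappa>])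
  then show ?thesis
    by (simp add: \<kappa>_def t_def)
qed

lemma power_length_dvd_prod_list:
  fixes \<tau> :: "'a::comm_monoid_mult"
  shows "(\<And>y. y \<in> set ys \<Longrightarrow> \<tau> dvd y) \<Longrightarrow> \<tau> ^ length ys dvd prod_list ys"
  by (induct ys) (auto intro: mult_dvd_mono)

lemma point_ideal_pow_dvd:
  assumes \<Phi>: "ring_homomorphism \<Phi>"
    and lin: "\<And>u v w. u * a + v * b + w * c = 0 \<Longrightarrow> \<tau> dvd \<Phi> (linform u v w)"
    and G: "G \<in> point_ideal_pow a b c e"
  shows "\<tau> ^ e dvd \<Phi> G"
  using G unfolding point_ideal_pow_def
proof (induct rule: ideal_gen.induct)
  case zero
  then show ?case by (simp add: ring_homomorphismD[OF \<Phi>])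
next
  case (step g h r)
  from step(1) obtain ls where g: "g = prod_list (map (\<lambda>(u, v, w). linform u v w) ls)"
    and ls: "length ls = e" "\<forall>(u, v, w) \<in> set ls. u * a + v * b + w * c = 0"
    by blast
  have "\<forall>y \<in> set (map \<Phi> (map (\<lambda>(u, v, w). linform u v w) ls)). \<tau> dvd y"
    using ls(2) lin by auto
  then have "\<tau> ^ e dvd \<Phi> g"
    using ls(1) unfolding g ring_homomorphism_prod_list[OF \<Phi>]
    by (metis length_map power_length_dvd_prod_list)
  with step(3) show ?case by (simp add: ring_homomorphismD[OF \<Phi>])
qed

lemma eq_0_if_X_power_dvd_mult:
  fixes p r :: "'a::idom poly"
  assumes dvd: "[:0, 1:] ^ n dvd p * r" and p0: "poly p 0 \<noteq> 0" and deg: "degree r < n"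
  shows "r = 0"
proof (rule ccontr)
  assume r: "r \<noteq> 0"
  with p0 have pr: "p * r \<noteq> 0" by auto
  have "n \<le> order 0 (p * r)"
    using dvd pr order_divides[of 0 n "p * r"] by simp
  also have "\<dots> = order 0 r"
    using order_mult[OF pr] order_0I[OF p0] by simp
  also have "\<dots> \<le> degree r"
    using order_degree[OF r] .
  finally show False using deg by simp
qed

lemma restrict_line_eq_0:
  fixes a b c a' b' c' :: "'a::field"
  assumes char: "prime CHAR('a)" "q = CHAR('a) ^ k"
    and e: "e \<le> q + 1" "d < e"
    and herm: "hermitian_form q a b c a b c = 0" "hermitian_form q a' b' c' a b c = 0"
      "hermitian_form q a b c a' b' c' = 0"
    and hom: "homogeneous3 d T" and sub: "subscheme_contained (hermitian q) a b c e T"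
  shows "restrict_line a b c a' b' c' T = 0"
proof -
  let ?\<Phi> = "restrict_line a b c a' b' c'"
  define t where "t = ([:0, 1:] :: 'a poly poly)"
  note \<Phi> = ring_homomorphism_restrict_line[of a b c a' b' c']
  from sub obtain U A u where U: "eval3 U a b c \<noteq> 0"
    and UA: "U * T - A * hermitian q \<in> point_ideal_pow a b c e"
    unfolding subscheme_contained_def by blast
  have "t dvd ?\<Phi> (linform u v w)" if "u * a + v * b + w * c = 0" for u v w
  proof
    show "?\<Phi> (linform u v w) = t * [:[:u * a' + v * b' + w * c':]:]"
      using that by (simp add: restrict_line_linform binary_linform_def t_def)
  qed
  then have "t ^ e dvd ?\<Phi> (U * T - A * hermitian q)"
    by (rule point_ideal_pow_dvd[OF \<Phi> _ UA])
  moreover have "t ^ e dvd ?\<Phi> (hermitian q)"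
    using restrict_line_hermitian[OF char herm] e(1) unfolding t_def
    by (metis dvd_mult le_imp_power_dvd)
  ultimately have "t ^ e dvd ?\<Phi> U * ?\<Phi> T"
    unfolding ring_homomorphismD(2,6)[OF \<Phi>] by (metis diff_add_cancel dvd_add dvd_mult)
  moreover have "poly (?\<Phi> U) 0 \<noteq> 0"
    \<comment> \<open>at \<open>t = 0, s = 1\<close> the line passes through \<open>P\<close>, where \<open>U\<close> does not vanish\<close>
  proof -
    have "poly (poly (?\<Phi> U) 0) 1 = eval3 U a b c"
      unfolding restrict_line_def eval3_eq_subst3
      by (subst subst3_comp[OF ring_homomorphism_const_const
            ring_homomorphism_comp[OF ring_homomorphism_poly ring_homomorphism_poly]])
         (simp add: binary_linform_def)
    with U show ?thesis by auto
  qed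
  moreover have "degree (?\<Phi> T) < e"
  proof -
    have "degree (?\<Phi> T) \<le> d"
      unfolding restrict_line_def
      by (rule degree_subst3_homogeneous_le[OF ring_homomorphism_const_const _ _ _ _ hom])
         (simp_all add: binary_linform_def)
    with e(2) show ?thesis by simp
  qed
  ultimately show ?thesis
    unfolding t_def by (rule eq_0_if_X_power_dvd_mult)
qed

section \<open>Linear change of coordinates\<close>

lemma lincomb_linform:
  "cst3 \<alpha> * linform u v w + cst3 \<beta> * linform u' v' w' + cst3 \<gamma> * linform u'' v'' w''
   = linform (\<alpha> * u + \<beta> * u' + \<gamma> * u'') (\<alpha> * v + \<beta> * v' + \<gamma> * v'') (\<alpha> * w + \<beta> * w' + \<gamma> * w'')"
  unfolding linform_def by (simp add: ring_homomorphismD[OF ring_homomorphism_cst3] algebra_simps)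

lemma linform_unit: "linform 1 0 0 = varX" "linform 0 1 0 = varY" "linform 0 0 1 = varZ"
  unfolding linform_def by (simp_all add: ring_homomorphismD[OF ring_homomorphism_cst3])

text \<open>The columns \<open>P, P', P''\<close> of the matrix \<open>(a a' a''; b b' b''; c c' c'')\<close> form a basis with
inverse matrix \<open>(xu xv xw; yu yv yw; zu zv zw)\<close>. In the coordinates of this basis the line
through \<open>P\<close> and \<open>P'\<close> is \<open>Z = 0\<close>, so a form vanishing identically on it is divisible by \<open>Z\<close>.\<close>

lemma linform_dvd_if_restrict_line_eq_0:
  fixes a b c a' b' c' a'' b'' c'' xu xv xw yu yv yw zu zv zw \<alpha> \<beta> \<gamma> :: "'a::field"
  assumes vanish: "restrict_line a b c a' b' c' T = 0"
    and inv1: "a*xu + a'*yu + a''*zu = 1" "a*xv + a'*yv + a''*zv = 0" "a*xw + a'*yw + a''*zw = 0"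
    and inv2: "b*xu + b'*yu + b''*zu = 0" "b*xv + b'*yv + b''*zv = 1" "b*xw + b'*yw + b''*zw = 0"
    and inv3: "c*xu + c'*yu + c''*zu = 0" "c*xv + c'*yv + c''*zv = 0" "c*xw + c'*yw + c''*zw = 1"
    and on_line: "\<alpha>*a + \<beta>*b + \<gamma>*c = 0" "\<alpha>*a' + \<beta>*b' + \<gamma>*c' = 0"
    and off_line: "\<alpha>*a'' + \<beta>*b'' + \<gamma>*c'' \<noteq> 0"
  shows "linform \<alpha> \<beta> \<gamma> dvd T"
proof -
  define \<kappa> where "\<kappa> = \<alpha>*a'' + \<beta>*b'' + \<gamma>*c''"
  define to_basis where "to_basis = subst3 cst3 (linform a a' a'') (linform b b' b'') (linform c c' c'')"
  define from_basis where
    "from_basis = subst3 cst3 (linform xu xv xw) (linform yu yv yw) (linform zu zv zw)"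
  have hom: "ring_homomorphism from_basis"
    unfolding from_basis_def by (rule ring_homomorphism_subst3[OF ring_homomorphism_cst3])
  have from_to_basis: "from_basis (to_basis G) = G" for G
    unfolding to_basis_def from_basis_def
    by (rule subst3_inverse)
       (simp_all only: subst3_linform[OF ring_homomorphism_cst3] lincomb_linform inv1 inv2 inv3
         flip: linform_unit)
  have "poly (to_basis T) 0 = restrict_line a b c a' b' c' T"
    unfolding to_basis_def restrict_line_def
    by (subst subst3_comp[OF ring_homomorphism_cst3 ring_homomorphism_poly])
       (simp add: cst3_def linform_def varX_def varY_def varZ_def binary_linform_def)
  then obtain H where H: "to_basis T = varZ * H"
    using vanish poly_eq_0_iff_dvd[of "to_basis T" 0] unfolding varZ_def by (auto elim: dvdE)
  have "to_basis (linform \<alpha> \<beta> \<gamma>) = cst3 \<kappa> * varZ"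
    unfolding to_basis_def subst3_linform[OF ring_homomorphism_cst3] lincomb_linform
    using on_line by (simp add: \<kappa>_def linform_def ring_homomorphismD[OF ring_homomorphism_cst3] mult.commute)
  then have "linform \<alpha> \<beta> \<gamma> = from_basis (cst3 \<kappa>) * from_basis varZ"
    using from_to_basis[of "linform \<alpha> \<beta> \<gamma>"] by (simp add: ring_homomorphismD(2)[OF hom])
  also have "from_basis (cst3 \<kappa>) = cst3 \<kappa>"
    unfolding from_basis_def by (rule subst3_cst3[OF ring_homomorphism_cst3])
  finally have "linform \<alpha> \<beta> \<gamma> = cst3 \<kappa> * from_basis varZ" .
  moreover have "T = from_basis varZ * from_basis H"
    using from_to_basis[of T] H by (simp add: ring_homomorphismD[OF hom])
  moreover have "cst3 (inverse \<kappa>) * cst3 \<kappa> = 1"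
    using off_line by (simp add: \<kappa>_def flip: ring_homomorphismD(2,3)[OF ring_homomorphism_cst3])
  ultimately have "T = linform \<alpha> \<beta> \<gamma> * (cst3 (inverse \<kappa>) * from_basis H)"
    by (simp add: algebra_simps)
  then show ?thesis ..
qed

section \<open>The Hermitian curve over a field of order \<open>q\<^sup>2\<close>\<close>

lemma of_nat_card_eq_0: "of_nat CARD('a::{comm_ring_1,finite}) = (0::'a)"
proof -
  have "(\<Sum>x\<in>UNIV. x) = (\<Sum>x\<in>UNIV. x + (1::'a))"
    by (rule sum.reindex_bij_witness[of _ "\<lambda>x. x + 1" "\<lambda>x. x - 1"]) auto
  then show ?thesis
    by (simp add: sum.distrib)
qed

lemma CHAR_eq_if_card_eq_prime_power:
  assumes p: "prime p" and card: "CARD('a::{field,finite}) = p ^ n"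
  shows "CHAR('a) = p"
proof -
  have prime: "prime CHAR('a)"
    by (rule prime_CHAR_semidom[OF finite_imp_CHAR_pos]) simp
  have "CHAR('a) dvd CARD('a)"
    using of_nat_card_eq_0[where 'a='a] by (simp only: of_nat_eq_0_iff_char_dvd)
  then have "CHAR('a) dvd p"
    unfolding card by (rule prime_dvd_power[OF prime])
  then show ?thesis
    by (rule primes_dvd_imp_eq[OF prime p])
qed

lemma power_card_eq_self:
  fixes x :: "'a::{field,finite}"
  shows "x ^ CARD('a) = x"
proof (cases "x = 0")
  case True
  then show ?thesis
    using finite_UNIV_card_ge_0[where 'a='a] by simp
next
  case False
  let ?N = "UNIV - {0::'a}"
  have image: "(*) x ` ?N = ?N"
  proof
    show "(*) x ` ?N \<subseteq> ?N"
      using False by auto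
    show "?N \<subseteq> (*) x ` ?N"
    proof
      fix y assume "y \<in> ?N"
      then have "y = x * (y / x)" "y / x \<in> ?N"
        using False by auto
      then show "y \<in> (*) x ` ?N" by blast
    qed
  qed
  have inj: "inj_on ((*) x) ?N"
    using False by (auto intro: inj_onI)
  have "prod (\<lambda>y. y) ?N = prod (\<lambda>y. x * y) ?N"
    using prod.reindex[OF inj, of "\<lambda>y. y"] unfolding image by (simp add: comp_def)
  also have "\<dots> = x ^ card ?N * prod (\<lambda>y. y) ?N"
    by (simp add: prod.distrib)
  finally have "x ^ card ?N = 1"
    by (simp add: prod_zero_iff)
  moreover have "CARD('a) = Suc (card ?N)"
    using finite_UNIV_card_ge_0[where 'a='a] by (simp add: card_Diff_singleton)
  ultimately show ?thesis
    by (metis power_Suc mult_1_right)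
qed

lemma power_power_eq_self_if_card_eq_square:
  fixes x :: "'a::{field,finite}"
  assumes "CARD('a) = q ^ 2"
  shows "(x ^ q) ^ q = x"
  using power_card_eq_self[of x] assms by (simp flip: power_mult add: power2_eq_square)

text \<open>A second point \<open>P'\<close> on the tangent line at \<open>P\<close> with \<open>h(P, P') = 0\<close>, completed to a basis
by a point off the tangent line: \<open>P' = (b^q, 0, a^q)\<close> and \<open>P'' = (0, 0, 1)\<close> when \<open>b \<noteq> 0\<close>;
otherwise \<open>P = (0 : 0 : 1)\<close>, \<open>P' = (1, 0, 0)\<close> and \<open>P'' = (0, 1, 0)\<close>.\<close>

lemma hermitian_tangent_dvd_if_vanishes_on_tangent:
  fixes a b c :: "'a::field"
  assumes q: "q \<ge> 1" and conj: "\<And>x::'a. (x ^ q) ^ q = x"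
    and P: "(a, b, c) \<noteq> (0, 0, 0)" "hermitian_form q a b c a b c = 0"
    and vanish: "\<And>a' b' c'. hermitian_form q a' b' c' a b c = 0 \<Longrightarrow>
      hermitian_form q a b c a' b' c' = 0 \<Longrightarrow> restrict_line a b c a' b' c' T = 0"
  shows "linform (- (a ^ q)) (c ^ q) (b ^ q) dvd T"
proof (cases "b = 0")
  case False
  define g h where "g = b ^ q" and "h = a ^ q"
  have "g \<noteq> 0"
    using False by (simp add: g_def)
  moreover have "restrict_line a b c g 0 h T = 0"
    using q by (intro vanish) (simp_all add: hermitian_form_def conj mult.commute g_def h_def)
  moreover have "b * c ^ q + c * g = a * h"
    using P(2) by (simp add: hermitian_form_def g_def h_def)
  ultimately have "linform (- h) (c ^ q) g dvd T"
    using False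
    by (intro linform_dvd_if_restrict_line_eq_0[where a'=g and b'=0 and c'=h and
          a''=0 and b''=0 and c''=1 and
          xu=0 and xv="1/b" and xw=0 and yu="1/g" and yv="-a/(b*g)" and yw=0 and
          zu="-h/g" and zv="-c/b + h*a/(b*g)" and zw=1])
       (simp_all add: field_simps, metis mult.commute)
  then show ?thesis
    by (simp add: g_def h_def)
next
  case True
  have "a * a ^ q = 0"
    using P(2) True q by (simp add: hermitian_form_def zero_power)
  then have a: "a = 0" by auto
  with True P(1) have c: "c \<noteq> 0" by simp
  have "restrict_line a b c 1 0 0 T = 0"
    using True a q by (intro vanish) (simp_all add: hermitian_form_def zero_power)
  then show ?thesis
    using True a c q
    by (intro linform_dvd_if_restrict_line_eq_0[where a'=1 and b'=0 and c'=0 and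
          a''=0 and b''=1 and c''=0 and
          xu=0 and xv=0 and xw="1/c" and yu=1 and yv=0 and yw=0 and zu=0 and zv=1 and zw=0])
       (simp_all add: zero_power)
qed

theorem lemma3p2:
  fixes q e d :: nat and a b c :: "'a::{field,finite}" and T :: "'a poly3"
  assumes "\<exists>p k. prime p \<and> k \<ge> 1 \<and> q = p ^ k"
    and "CARD('a) = q ^ 2"
    and "2 \<le> e" and "e \<le> q + 1"
    and "(a, b, c) \<noteq> (0, 0, 0)"
    and "eval3 (hermitian q) a b c = 0"
    and "T \<noteq> 0" and "homogeneous3 d T" and "d \<le> e - 1"
    and "subscheme_contained (hermitian q) a b c e T"
  shows "tangent_line (hermitian q) a b c dvd T"
proof -
  from assms(1) obtain p k where p: "prime p" and k: "k \<ge> 1" and q: "q = p ^ k"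
    by blast
  have "CARD('a) = p ^ (k * 2)"
    using assms(2) q by (simp add: power_mult)
  then have char: "CHAR('a) = p"
    by (rule CHAR_eq_if_card_eq_prime_power[OF p])
  have char_q: "prime CHAR('a)" "q = CHAR('a) ^ k" and q1: "q \<ge> 1"
    using p q char prime_gt_0_nat[OF p] by simp_all
  have "of_nat q = (0::'a)"
    using k by (simp add: q of_nat_eq_0_iff_char_dvd char)
  then have "tangent_line (hermitian q) a b c = linform (- (a ^ q)) (c ^ q) (b ^ q)"
    by (rule tangent_line_hermitian)
  also have "\<dots> dvd T"
  proof (rule hermitian_tangent_dvd_if_vanishes_on_tangent[OF q1
        power_power_eq_self_if_card_eq_square[OF assms(2)] assms(5)])
    show P: "hermitian_form q a b c a b c = 0"
      using assms(6) by (simp only: eval3_hermitian)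
    have "d < e"
      using assms(3,9) by linarith
    then show "restrict_line a b c a' b' c' T = 0"
      if "hermitian_form q a' b' c' a b c = 0" "hermitian_form q a b c a' b' c' = 0" for a' b' c'
      by (rule restrict_line_eq_0[OF char_q assms(4) _ P that assms(8,10)])
  qed
  finally show ?thesis .
qed

end
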